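(* Let $W$ be a finite-dimensional complex vector space and let $\mathcal{B}$ be a finite set of linear subspaces of $W$, equipped with a linear order. Suppose $\mathcal{B}$ contains two distinct subspaces $u,v$ with $u\subset v$, and let $\mathcal{B}'=\mathcal{B}\setminus\{u\}$ with the induced linear order. Then the natural inclusion $D(\mathcal{B}')\hookrightarrow D(\mathcal{B})$ is a quasi-isomorphism of cochain complexes (it induces an isomorphism on cohomology).
   Context: For a finite set $\mathcal{C}$ of linear subspaces of a complex vector space $W$, equipped with a linear order, $D(\mathcal{C})$ denotes the following cochain complex over $\mathbb{Q}$. As a vector space it has basis all subsets $\sigma\subseteq\mathcal{C}$. Write $\vee\sigma=\bigcap_{x\in\sigma}x$ (with $\vee\emptyset=W$). The degree of $\sigma$ is $\deg\sigma=2\operatorname{codim}_W(\vee\sigma)-|\sigma|$. For $\sigma=\{x_{i_1},\dots,x_{i_r}\}$ listed in increasing order for the given linear order, the differential is $$d\sigma=\sum_{j\,:\,\vee(\sigma\setminus\{x_{i_j}\})=\vee\sigma}(-1)^j\,(\sigma\setminus\{x_{i_j}\}).$$ Here $\mathcal{C}$ need not satisfy any non-inclusion condition. For $\mathcal{C}'\subseteq\mathcal{C}$ with the induced order, $D(\mathcal{C}')$ is the subcomplex of $D(\mathcal{C})$ spanned by subsets of $\mathcal{C}'$. *)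

theory Defs
  imports "HOL-Analysis.Analysis"
begin

text \<open>The ambient space W is complex^'n (a finite-dimensional complex vector space of
dimension CARD('n)); linear subspaces are complex subspaces (vec.subspace), and
dimension is complex dimension (vec.dim).  A linear order on a finite set C of subspaces
is a relation R with linear_order_on C R.  Cochains of D(C) are rational-valued
functions on finite sets of subspaces, supported on subsets of C.\<close>

type_synonym 'n subsp = "(complex ^ 'n::finite) set"

definition meet :: "('n::finite) subsp set \<Rightarrow> ('n::finite) subsp" where
  "meet \<sigma> = \<Inter> \<sigma>"

definition codim :: "('n::finite) subsp \<Rightarrow> nat" where
  "codim X = CARD('n) - vec.dim X"

definition deg :: "('n::finite) subsp set \<Rightarrow> int" where
  "deg \<sigma> = 2 * int (codim (meet \<sigma>)) - int (card \<sigma>)"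

text \<open>Position (1-based) of x in \<sigma> listed increasingly for R.\<close>
definition pos :: "(('n::finite) subsp \<times> ('n::finite) subsp) set \<Rightarrow> ('n::finite) subsp set \<Rightarrow> ('n::finite) subsp \<Rightarrow> nat" where
  "pos R \<sigma> x = card {y \<in> \<sigma>. (y, x) \<in> R}"

text \<open>Coefficient of the basis element \<tau> in d\<sigma>.\<close>
definition dcoef :: "(('n::finite) subsp \<times> ('n::finite) subsp) set \<Rightarrow> ('n::finite) subsp set \<Rightarrow> ('n::finite) subsp set \<Rightarrow> rat" where
  "dcoef R \<sigma> \<tau> =
     (\<Sum>x\<in>{x \<in> \<sigma>. \<tau> = \<sigma> - {x} \<and> meet (\<sigma> - {x}) = meet \<sigma>}. (-1) ^ pos R \<sigma> x)"

definition cochains :: "('n::finite) subsp set \<Rightarrow> int \<Rightarrow> (('n::finite) subsp set \<Rightarrow> rat) set" where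
  "cochains C k = {c. \<forall>\<sigma>. c \<sigma> \<noteq> 0 \<longrightarrow> \<sigma> \<subseteq> C \<and> deg \<sigma> = k}"

definition dif :: "('n::finite) subsp set \<Rightarrow> (('n::finite) subsp \<times> ('n::finite) subsp) set
                   \<Rightarrow> (('n::finite) subsp set \<Rightarrow> rat) \<Rightarrow> (('n::finite) subsp set \<Rightarrow> rat)" where
  "dif C R c = (\<lambda>\<tau>. \<Sum>\<sigma>\<in>Pow C. c \<sigma> * dcoef R \<sigma> \<tau>)"

definition cocycles where
  "cocycles C R k = {c \<in> cochains C k. dif C R c = (\<lambda>_. 0)}"

definition coboundaries where
  "coboundaries C R k = dif C R ` cochains C (k - 1)"

definition cls where
  "cls C R k x = {y \<in> cocycles C R k. x - y \<in> coboundaries C R k}"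

definition cohom where
  "cohom C R k = cls C R k ` cocycles C R k"

text \<open>Map on cohomology induced by the inclusion D(C') \<subseteq> D(C): a class is sent to the
class (in D(C)) of its representatives.\<close>
definition incl_cohom where
  "incl_cohom C R k X = (\<Union>x\<in>X. cls C R k x)"

definition quasi_iso_incl where
  "quasi_iso_incl C' R' C R \<longleftrightarrow> (\<forall>k. bij_betw (incl_cohom C R k) (cohom C' R' k) (cohom C R k))"

end

theory Submission imports Defs begin

text \<open>The basis elements \<open>\<sigma> \<ni> u\<close> span the quotient \<open>D(\<B>)/D(\<B>')\<close>.  For them \<open>\<Inter>\<sigma> \<subseteq> u \<subseteq> v\<close>,
so adjoining or removing \<open>v\<close> never changes \<open>\<vee>\<sigma>\<close>; hence the signed operator \<open>h\<close> that removes \<open>v\<close>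
from sets containing both \<open>u\<close> and \<open>v\<close> satisfies \<open>dh + hd = id\<close> on the quotient.  Subtracting
\<open>d(hz)\<close> from a cocycle \<open>z\<close>, or from a cochain whose differential lies in \<open>D(\<B>')\<close>, lands in
\<open>D(\<B>')\<close>; this gives surjectivity and injectivity on cohomology.\<close>

definition psign :: "('n::finite) subsp rel \<Rightarrow> 'n subsp set \<Rightarrow> 'n subsp \<Rightarrow> rat" where
  "psign R \<sigma> x = (-1) ^ pos R \<sigma> x"

lemma meet_insert: "meet (insert x \<tau>) = x \<inter> meet \<tau>"
  by (simp add: meet_def)

lemma meet_insert_eq_iff: "meet (insert x \<tau>) = meet \<tau> \<longleftrightarrow> meet \<tau> \<subseteq> x"
  by (auto simp: meet_def)

lemma meet_subset_of_mem: "u \<in> \<tau> \<Longrightarrow> meet \<tau> \<subseteq> u"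
  by (auto simp: meet_def)

lemma deg_insert:
  assumes "finite \<tau>" "x \<notin> \<tau>" "meet \<tau> \<subseteq> x"
  shows "deg (insert x \<tau>) = deg \<tau> - 1"
  using assms by (simp add: deg_def meet_insert Int_absorb1)

lemma pos_insert:
  assumes "finite \<tau>" "x \<notin> \<tau>"
  shows "pos R (insert x \<tau>) y = pos R \<tau> y + (if (x, y) \<in> R then 1 else 0)"
proof -
  have "{z \<in> insert x \<tau>. (z, y) \<in> R}
      = (if (x, y) \<in> R then insert x {z \<in> \<tau>. (z, y) \<in> R} else {z \<in> \<tau>. (z, y) \<in> R})"
    by auto
  then show ?thesis using assms by (simp add: pos_def)
qed

lemma psign_insert:
  assumes "finite \<tau>" "x \<notin> \<tau>"
  shows "psign R (insert x \<tau>) y = (if (x, y) \<in> R then - psign R \<tau> y else psign R \<tau> y)"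
  using pos_insert[OF assms, of R y] by (simp add: psign_def)

lemma psign_insert_self:
  assumes "finite \<tau>" "x \<notin> \<tau>" "(x, x) \<in> R"
  shows "psign R (insert x \<tau>) x = - psign R \<tau> x"
  using psign_insert[OF assms(1,2)] assms(3) by simp

lemma psign_mult_self: "psign R \<sigma> x * psign R \<sigma> x = 1"
  by (simp add: psign_def flip: power_add)

lemma linear_order_on_reflD: "linear_order_on C R \<Longrightarrow> x \<in> C \<Longrightarrow> (x, x) \<in> R"
  unfolding linear_order_on_def partial_order_on_def preorder_on_def refl_on_def by blast

lemma linear_order_on_not_iff:
  assumes "linear_order_on C R" "x \<in> C" "y \<in> C" "x \<noteq> y"
  shows "(x, y) \<in> R \<longleftrightarrow> (y, x) \<notin> R"
  using assms unfolding linear_order_on_def partial_order_on_def total_on_def antisym_def by blast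

lemma dcoef_insert:
  assumes "x \<notin> \<tau>"
  shows "dcoef R (insert x \<tau>) \<tau> = (if meet \<tau> \<subseteq> x then psign R (insert x \<tau>) x else 0)"
proof -
  have "{y \<in> insert x \<tau>. \<tau> = insert x \<tau> - {y} \<and> meet (insert x \<tau> - {y}) = meet (insert x \<tau>)}
        = (if meet \<tau> \<subseteq> x then {x} else {})"
    using assms by (auto simp: meet_def)
  then show ?thesis by (simp add: dcoef_def psign_def)
qed

lemma dcoef_eq_0_if_not_insert:
  assumes "\<And>x. x \<in> \<sigma> - \<tau> \<Longrightarrow> \<sigma> \<noteq> insert x \<tau>"
  shows "dcoef R \<sigma> \<tau> = 0"
proof -
  have "{x \<in> \<sigma>. \<tau> = \<sigma> - {x} \<and> meet (\<sigma> - {x}) = meet \<sigma>} = {}"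
    using assms by blast
  then show ?thesis unfolding dcoef_def by (simp only:) simp
qed

lemma dif_eq_sum:
  assumes "finite C"
  shows "dif C R c \<tau> = (if \<tau> \<subseteq> C then
           (\<Sum>x\<in>C - \<tau>. if meet \<tau> \<subseteq> x then c (insert x \<tau>) * psign R (insert x \<tau>) x else 0)
         else 0)"
proof (cases "\<tau> \<subseteq> C")
  case False
  then have "dcoef R \<sigma> \<tau> = 0" if "\<sigma> \<in> Pow C" for \<sigma>
    using that by (intro dcoef_eq_0_if_not_insert) auto
  then show ?thesis using False by (simp add: dif_def)
next
  case True
  let ?S = "(\<lambda>x. insert x \<tau>) ` (C - \<tau>)"
  have "dcoef R \<sigma> \<tau> = 0" if "\<sigma> \<in> Pow C - ?S" for \<sigma>
    using that by (intro dcoef_eq_0_if_not_insert) auto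
  then have "dif C R c \<tau> = (\<Sum>\<sigma>\<in>?S. c \<sigma> * dcoef R \<sigma> \<tau>)"
    unfolding dif_def by (intro sum.mono_neutral_right) (use assms True in auto)
  also have "\<dots> = (\<Sum>x\<in>C - \<tau>. c (insert x \<tau>) * dcoef R (insert x \<tau>) \<tau>)"
    by (rule sum.reindex_cong[where l = "\<lambda>x. insert x \<tau>"]) (auto simp: inj_on_def)
  finally show ?thesis
    using True by (auto simp: dcoef_insert intro!: sum.cong)
qed

lemma dif_diff: "dif C R (a - b) = dif C R a - dif C R b"
  by (rule ext) (simp add: dif_def sum_subtractf left_diff_distrib)

lemma dif_add: "dif C R (\<lambda>\<sigma>. a \<sigma> + b \<sigma>) = (\<lambda>\<tau>. dif C R a \<tau> + dif C R b \<tau>)"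
  by (rule ext) (simp add: dif_def sum.distrib distrib_right)

lemma dif_zero: "dif C R (\<lambda>_. 0) = (\<lambda>_. 0)"
  by (rule ext) (simp add: dif_def)

lemma dif_cochains:
  assumes "finite C" "c \<in> cochains C k"
  shows "dif C R c \<in> cochains C (k + 1)"
  unfolding cochains_def mem_Collect_eq
proof (intro allI impI)
  fix \<tau> assume nz: "dif C R c \<tau> \<noteq> 0"
  then have \<tau>C: "\<tau> \<subseteq> C" using assms(1) by (auto simp: dif_eq_sum split: if_splits)
  from nz \<tau>C obtain x where x: "x \<in> C - \<tau>"
    and "(if meet \<tau> \<subseteq> x then c (insert x \<tau>) * psign R (insert x \<tau>) x else 0) \<noteq> 0"
    by (auto simp: dif_eq_sum[OF assms(1)] dest: sum.not_neutral_contains_not_neutral)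
  then have "meet \<tau> \<subseteq> x" "c (insert x \<tau>) \<noteq> 0" by (auto split: if_splits)
  moreover have "finite \<tau>" using \<tau>C assms(1) finite_subset by blast
  ultimately show "\<tau> \<subseteq> C \<and> deg \<tau> = k + 1"
    using assms(2) x \<tau>C deg_insert[of \<tau> x] by (auto simp: cochains_def)
qed

lemma dif_restrict:
  assumes "finite C" "C' \<subseteq> C" "\<And>\<sigma>. c \<sigma> \<noteq> 0 \<Longrightarrow> \<sigma> \<subseteq> C'"
  shows "dif C' (Restr R C') c = dif C R c"
proof (rule ext)
  fix \<tau>
  have "dcoef (Restr R C') \<sigma> \<tau> = dcoef R \<sigma> \<tau>" if "\<sigma> \<subseteq> C'" for \<sigma>
  proof -
    have "pos (Restr R C') \<sigma> x = pos R \<sigma> x" if "x \<in> \<sigma>" for x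
      unfolding pos_def using \<open>\<sigma> \<subseteq> C'\<close> that by (intro arg_cong[where f = card]) auto
    then show ?thesis unfolding dcoef_def by (intro sum.cong refl) auto
  qed
  moreover have "dif C R c \<tau> = (\<Sum>\<sigma>\<in>Pow C'. c \<sigma> * dcoef R \<sigma> \<tau>)"
    unfolding dif_def
    by (rule sum.mono_neutral_right) (use assms in \<open>auto intro: finite_subset\<close>)
  ultimately show "dif C' (Restr R C') c \<tau> = dif C R c \<tau>"
    unfolding dif_def by simp
qed

subsection \<open>\<open>d \<circ> d = 0\<close>\<close>

lemma sum_sum_antisym_eq_0:
  fixes f :: "'a \<Rightarrow> 'a \<Rightarrow> 'b::linordered_ab_group_add"
  assumes "\<And>x y. x \<in> S \<Longrightarrow> y \<in> S \<Longrightarrow> f x y = - f y x"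
  shows "(\<Sum>x\<in>S. \<Sum>y\<in>S. f x y) = 0"
proof -
  have "(\<Sum>x\<in>S. \<Sum>y\<in>S. f x y) = (\<Sum>y\<in>S. \<Sum>x\<in>S. - f y x)"
    by (subst sum.swap) (intro sum.cong refl assms)
  then show ?thesis by (simp add: sum_negf)
qed

definition psign2 :: "('n::finite) subsp rel \<Rightarrow> 'n subsp set \<Rightarrow> 'n subsp \<Rightarrow> 'n subsp \<Rightarrow> rat" where
  "psign2 R \<tau> x y = psign R \<tau> x * (if (x, y) \<in> R then - psign R \<tau> y else psign R \<tau> y)"

lemma psign_insert_insert:
  assumes "finite \<tau>" "x \<notin> \<tau>" "y \<notin> \<tau>" "x \<noteq> y" "(x, x) \<in> R" "(y, y) \<in> R"
  shows "psign R (insert y (insert x \<tau>)) y * psign R (insert x \<tau>) x = psign2 R \<tau> x y"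
  using assms by (simp add: psign2_def psign_insert_self psign_insert)

lemma psign2_antisym:
  assumes "linear_order_on C R" "x \<in> C" "y \<in> C" "x \<noteq> y"
  shows "psign2 R \<tau> x y = - psign2 R \<tau> y x"
proof -
  have "(y, x) \<in> R \<longleftrightarrow> (x, y) \<notin> R"
    using linear_order_on_not_iff[OF assms] by blast
  then show ?thesis by (cases "(x, y) \<in> R") (simp_all add: psign2_def)
qed

lemma dif_dif_eq_sum:
  assumes fin: "finite C" and order: "linear_order_on C R" and \<tau>C: "\<tau> \<subseteq> C"
  shows "dif C R (dif C R c) \<tau> = (\<Sum>x\<in>C - \<tau>. \<Sum>y\<in>C - \<tau>.
           if x \<noteq> y \<and> meet \<tau> \<subseteq> x \<and> meet \<tau> \<subseteq> y then c (insert y (insert x \<tau>)) * psign2 R \<tau> x y else 0)"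
    (is "_ = (\<Sum>x\<in>C - \<tau>. \<Sum>y\<in>C - \<tau>. ?G x y)")
  unfolding dif_eq_sum[OF fin, of R "dif C R c" \<tau>] using \<tau>C
proof (simp, intro sum.cong refl)
  fix x assume x: "x \<in> C - \<tau>"
  have fin\<tau>: "finite \<tau>" using finite_subset[OF \<tau>C fin] .
  show "(if meet \<tau> \<subseteq> x then dif C R c (insert x \<tau>) * psign R (insert x \<tau>) x else 0)
      = (\<Sum>y\<in>C - \<tau>. ?G x y)"
  proof (cases "meet \<tau> \<subseteq> x")
    case mx: True
    have mi: "meet (insert x \<tau>) = meet \<tau>" using mx by (simp add: meet_insert_eq_iff)
    have "(\<Sum>y\<in>C - \<tau>. ?G x y) = (\<Sum>y\<in>C - insert x \<tau>. ?G x y)"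
      using x fin by (intro sum.mono_neutral_right) auto
    also have "\<dots> = (\<Sum>y\<in>C - insert x \<tau>. (if meet (insert x \<tau>) \<subseteq> y then
        c (insert y (insert x \<tau>)) * psign R (insert y (insert x \<tau>)) y else 0) * psign R (insert x \<tau>) x)"
    proof (rule sum.cong)
      fix y assume y: "y \<in> C - insert x \<tau>"
      then have "psign R (insert y (insert x \<tau>)) y * psign R (insert x \<tau>) x = psign2 R \<tau> x y"
        using x fin\<tau> linear_order_on_reflD[OF order] by (intro psign_insert_insert) auto
      then show "?G x y = (if meet (insert x \<tau>) \<subseteq> y then
          c (insert y (insert x \<tau>)) * psign R (insert y (insert x \<tau>)) y else 0) * psign R (insert x \<tau>) x"
        using y mx unfolding mi by auto
    qed simp
    finally show ?thesis
      using x mx \<tau>C by (simp add: dif_eq_sum[OF fin, of R c "insert x \<tau>"] sum_distrib_right)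
  qed simp
qed

lemma dif_dif:
  assumes "finite C" "linear_order_on C R"
  shows "dif C R (dif C R c) = (\<lambda>_. 0)"
proof
  fix \<tau>
  show "dif C R (dif C R c) \<tau> = 0"
  proof (cases "\<tau> \<subseteq> C")
    case True
    show ?thesis unfolding dif_dif_eq_sum[OF assms True]
    proof (rule sum_sum_antisym_eq_0)
      fix x y assume "x \<in> C - \<tau>" "y \<in> C - \<tau>"
      then have "x \<noteq> y \<Longrightarrow> psign2 R \<tau> x y = - psign2 R \<tau> y x"
        by (intro psign2_antisym[OF assms(2)]) auto
      moreover have "c (insert x (insert y \<tau>)) = c (insert y (insert x \<tau>))"
        by (simp only: insert_commute)
      ultimately show "(if x \<noteq> y \<and> meet \<tau> \<subseteq> x \<and> meet \<tau> \<subseteq> y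
            then c (insert y (insert x \<tau>)) * psign2 R \<tau> x y else 0)
          = - (if y \<noteq> x \<and> meet \<tau> \<subseteq> y \<and> meet \<tau> \<subseteq> x
            then c (insert x (insert y \<tau>)) * psign2 R \<tau> y x else 0)"
        by (cases "x = y") auto
    qed
  qed (use assms(1) in \<open>simp add: dif_eq_sum\<close>)
qed

lemma cochains_diff: "a \<in> cochains C k \<Longrightarrow> b \<in> cochains C k \<Longrightarrow> a - b \<in> cochains C k"
  unfolding cochains_def by force

lemma cochains_add:
  "a \<in> cochains C k \<Longrightarrow> b \<in> cochains C k \<Longrightarrow> (\<lambda>\<sigma>. a \<sigma> + b \<sigma>) \<in> cochains C k"
  unfolding cochains_def by force

lemma zero_in_cochains: "(\<lambda>_. 0) \<in> cochains C k"
  by (simp add: cochains_def)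

lemma cochains_mono: "C' \<subseteq> C \<Longrightarrow> cochains C' k \<subseteq> cochains C k"
  unfolding cochains_def by blast

lemma cochains_subset_iff:
  "C' \<subseteq> C \<Longrightarrow> c \<in> cochains C' k \<longleftrightarrow> c \<in> cochains C k \<and> (\<forall>\<tau>. \<not> \<tau> \<subseteq> C' \<longrightarrow> c \<tau> = 0)"
  unfolding cochains_def by blast

lemma coboundaries_diff:
  "a \<in> coboundaries C R k \<Longrightarrow> b \<in> coboundaries C R k \<Longrightarrow> a - b \<in> coboundaries C R k"
  unfolding coboundaries_def by (auto simp flip: dif_diff intro!: imageI cochains_diff)

lemma coboundaries_add:
  "a \<in> coboundaries C R k \<Longrightarrow> b \<in> coboundaries C R k \<Longrightarrow> (\<lambda>\<sigma>. a \<sigma> + b \<sigma>) \<in> coboundaries C R k"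
  unfolding coboundaries_def by (auto simp flip: dif_add intro!: imageI cochains_add)

lemma zero_in_coboundaries: "(\<lambda>_. 0) \<in> coboundaries C R k"
  unfolding coboundaries_def using dif_zero[of C R] zero_in_cochains[of C "k - 1"] by (metis image_eqI)

lemma cls_self: "x \<in> cocycles C R k \<Longrightarrow> x \<in> cls C R k x"
  using zero_in_coboundaries[of C R k] by (simp add: cls_def fun_diff_def)

lemma cls_eq_iff:
  assumes "x \<in> cocycles C R k" "y \<in> cocycles C R k"
  shows "cls C R k x = cls C R k y \<longleftrightarrow> x - y \<in> coboundaries C R k"
proof
  assume "cls C R k x = cls C R k y"
  then have "y \<in> cls C R k x" using cls_self[OF assms(2)] by simp
  then show "x - y \<in> coboundaries C R k" by (simp add: cls_def)
next
  assume xy: "x - y \<in> coboundaries C R k"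
  have "x - z \<in> coboundaries C R k \<longleftrightarrow> y - z \<in> coboundaries C R k" for z
  proof
    assume "x - z \<in> coboundaries C R k"
    from coboundaries_diff[OF this xy] show "y - z \<in> coboundaries C R k" by (simp add: fun_diff_def)
  next
    assume "y - z \<in> coboundaries C R k"
    from coboundaries_add[OF xy this] show "x - z \<in> coboundaries C R k" by (simp add: fun_diff_def)
  qed
  then show "cls C R k x = cls C R k y" by (auto simp: cls_def)
qed

lemma incl_cohom_cls:
  assumes "cocycles C' R' k \<subseteq> cocycles C R k" "coboundaries C' R' k \<subseteq> coboundaries C R k"
    and "x \<in> cocycles C' R' k"
  shows "incl_cohom C R k (cls C' R' k x) = cls C R k x"
proof
  show "incl_cohom C R k (cls C' R' k x) \<subseteq> cls C R k x"
  proof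
    fix z assume "z \<in> incl_cohom C R k (cls C' R' k x)"
    then obtain y where y: "y \<in> cls C' R' k x" and z: "z \<in> cls C R k y"
      by (auto simp: incl_cohom_def)
    have "cls C R k x = cls C R k y"
      using y assms by (subst cls_eq_iff) (auto simp: cls_def)
    then show "z \<in> cls C R k x" using z by simp
  qed
  show "cls C R k x \<subseteq> incl_cohom C R k (cls C' R' k x)"
    unfolding incl_cohom_def using cls_self[OF assms(3)] by blast
qed

lemma bij_betw_incl_cohom:
  assumes Z: "cocycles C' R' k \<subseteq> cocycles C R k" and B: "coboundaries C' R' k \<subseteq> coboundaries C R k"
    and inj: "\<And>w. w \<in> cochains C' k \<Longrightarrow> w \<in> coboundaries C R k \<Longrightarrow> w \<in> coboundaries C' R' k"
    and surj: "\<And>z. z \<in> cocycles C R k \<Longrightarrow> \<exists>z'\<in>cocycles C' R' k. z - z' \<in> coboundaries C R k"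
  shows "bij_betw (incl_cohom C R k) (cohom C' R' k) (cohom C R k)"
proof (rule bij_betw_imageI)
  note incl = incl_cohom_cls[OF Z B]
  show "inj_on (incl_cohom C R k) (cohom C' R' k)"
  proof (rule inj_onI)
    fix X Y assume "X \<in> cohom C' R' k" "Y \<in> cohom C' R' k"
      and eq: "incl_cohom C R k X = incl_cohom C R k Y"
    then obtain x y where x: "x \<in> cocycles C' R' k" "X = cls C' R' k x"
      and y: "y \<in> cocycles C' R' k" "Y = cls C' R' k y"
      by (auto simp: cohom_def)
    have "x - y \<in> coboundaries C R k"
      using eq x y Z incl cls_eq_iff[of x C R k y] by auto
    moreover have "x - y \<in> cochains C' k"
      using x y by (simp add: cocycles_def cochains_diff)
    ultimately show "X = Y" using inj x y cls_eq_iff[of x C' R' k y] by simp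
  qed
  show "incl_cohom C R k ` cohom C' R' k = cohom C R k"
  proof
    show "incl_cohom C R k ` cohom C' R' k \<subseteq> cohom C R k"
      using incl Z by (auto simp: cohom_def)
    show "cohom C R k \<subseteq> incl_cohom C R k ` cohom C' R' k"
    proof
      fix X assume "X \<in> cohom C R k"
      then obtain z where z: "z \<in> cocycles C R k" "X = cls C R k z" by (auto simp: cohom_def)
      then obtain z' where z': "z' \<in> cocycles C' R' k" "z - z' \<in> coboundaries C R k"
        using surj by blast
      have "X = incl_cohom C R k (cls C' R' k z')"
        using z z' Z incl cls_eq_iff[of z C R k z'] by auto
      then show "X \<in> incl_cohom C R k ` cohom C' R' k" using z'(1) by (auto simp: cohom_def)
    qed
  qed
qed

subsection \<open>Contractible quotients\<close>

text \<open>A homotopy \<open>h\<close> of \<open>D(C)\<close> that kills \<open>D(C')\<close> and satisfies \<open>dh + hd = id\<close> on the basis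
elements outside \<open>C'\<close> is a contraction of the quotient \<open>D(C)/D(C')\<close>.\<close>

locale quotient_contraction =
  fixes C C' :: "('n::finite) subsp set" and R :: "'n subsp rel"
    and h :: "('n subsp set \<Rightarrow> rat) \<Rightarrow> ('n subsp set \<Rightarrow> rat)"
  assumes finite: "finite C" and subset: "C' \<subseteq> C" and order: "linear_order_on C R"
    and h_cochains: "\<And>c k. c \<in> cochains C k \<Longrightarrow> h c \<in> cochains C (k - 1)"
    and h_vanishes: "\<And>c k. c \<in> cochains C' k \<Longrightarrow> h c = (\<lambda>_. 0)"
    and homotopy: "\<And>c k \<tau>. c \<in> cochains C k \<Longrightarrow> \<tau> \<subseteq> C \<Longrightarrow> \<not> \<tau> \<subseteq> C' \<Longrightarrow>
                     c \<tau> = dif C R (h c) \<tau> + h (dif C R c) \<tau>"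
begin

lemma dif_subcomplex: "c \<in> cochains C' k \<Longrightarrow> dif C' (Restr R C') c = dif C R c"
  using finite subset by (intro dif_restrict) (auto simp: cochains_def)

lemma dif_h_cochains: "c \<in> cochains C k \<Longrightarrow> dif C R (h c) \<in> cochains C k"
  using dif_cochains[OF finite h_cochains] by fastforce

lemma retract_in_subcomplex:
  assumes c: "c \<in> cochains C k" and dc: "dif C R c \<in> cochains C' (k + 1)"
  shows "c - dif C R (h c) \<in> cochains C' k"
proof -
  have "(c - dif C R (h c)) \<tau> = 0" if "\<not> \<tau> \<subseteq> C'" for \<tau>
  proof (cases "\<tau> \<subseteq> C")
    case True
    then show ?thesis using homotopy[OF c True that] h_vanishes[OF dc] by simp
  next
    case False
    then have "c \<tau> = 0" "dif C R (h c) \<tau> = 0"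
      using c dif_h_cochains[OF c] unfolding cochains_def by blast+
    then show ?thesis by simp
  qed
  then show ?thesis
    using cochains_diff[OF c dif_h_cochains[OF c]] subset by (simp add: cochains_subset_iff)
qed

theorem quasi_iso_incl: "quasi_iso_incl C' (Restr R C') C R"
  unfolding quasi_iso_incl_def
proof (intro allI bij_betw_incl_cohom)
  fix k
  show "cocycles C' (Restr R C') k \<subseteq> cocycles C R k"
    using cochains_mono[OF subset] dif_subcomplex by (auto simp: cocycles_def)
  show "coboundaries C' (Restr R C') k \<subseteq> coboundaries C R k"
    using cochains_mono[OF subset] dif_subcomplex by (auto simp: coboundaries_def)
next
  fix k w assume w: "w \<in> cochains C' k" "w \<in> coboundaries C R k"
  then obtain b where b: "b \<in> cochains C (k - 1)" "w = dif C R b"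
    by (auto simp: coboundaries_def)
  have b': "b - dif C R (h b) \<in> cochains C' (k - 1)"
    using retract_in_subcomplex[OF b(1)] w b by simp
  have "dif C' (Restr R C') (b - dif C R (h b)) = dif C R b - dif C R (dif C R (h b))"
    by (subst dif_subcomplex[OF b']) (rule dif_diff)
  also have "\<dots> = w"
    using b dif_dif[OF finite order] by (simp add: fun_diff_def)
  finally show "w \<in> coboundaries C' (Restr R C') k"
    using b' unfolding coboundaries_def by (metis image_eqI)
next
  fix k z assume "z \<in> cocycles C R k"
  then have z: "z \<in> cochains C k" "dif C R z = (\<lambda>_. 0)" by (auto simp: cocycles_def)
  have z': "z - dif C R (h z) \<in> cochains C' k"
    using retract_in_subcomplex[OF z(1)] by (simp add: z(2) zero_in_cochains)
  have "dif C' (Restr R C') (z - dif C R (h z)) = dif C R z - dif C R (dif C R (h z))"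
    by (subst dif_subcomplex[OF z']) (rule dif_diff)
  also have "\<dots> = (\<lambda>_. 0)"
    using z dif_dif[OF finite order] by (simp add: fun_diff_def)
  finally have "dif C' (Restr R C') (z - dif C R (h z)) = (\<lambda>_. 0)" .
  moreover have "z - (z - dif C R (h z)) \<in> coboundaries C R k"
  proof -
    have "z - (z - dif C R (h z)) = dif C R (h z)" by (simp add: fun_diff_def)
    then show ?thesis using h_cochains[OF z(1)] unfolding coboundaries_def by simp
  qed
  ultimately show "\<exists>z'\<in>cocycles C' (Restr R C') k. z - z' \<in> coboundaries C R k"
    using z' unfolding cocycles_def by blast
qed

end

subsection \<open>Toggling a larger subspace\<close>

definition toggle_homotopy ::
    "('n::finite) subsp rel \<Rightarrow> 'n subsp \<Rightarrow> 'n subsp \<Rightarrow> ('n subsp set \<Rightarrow> rat) \<Rightarrow> ('n subsp set \<Rightarrow> rat)"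
  where "toggle_homotopy R u v c \<tau> = (if u \<in> \<tau> \<and> v \<in> \<tau> then psign R \<tau> v * c (\<tau> - {v}) else 0)"

lemma toggle_homotopy_cochains:
  assumes "finite C" "v \<in> C" "u \<noteq> v" "u \<subseteq> v" "c \<in> cochains C k"
  shows "toggle_homotopy R u v c \<in> cochains C (k - 1)"
  unfolding cochains_def mem_Collect_eq
proof (intro allI impI)
  fix \<tau> assume "toggle_homotopy R u v c \<tau> \<noteq> 0"
  then have "u \<in> \<tau>" "v \<in> \<tau>" "c (\<tau> - {v}) \<noteq> 0" by (auto simp: toggle_homotopy_def split: if_splits)
  then have \<rho>: "\<tau> - {v} \<subseteq> C" "deg (\<tau> - {v}) = k" "meet (\<tau> - {v}) \<subseteq> v" "\<tau> = insert v (\<tau> - {v})"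
    using assms meet_subset_of_mem[of u "\<tau> - {v}"] by (auto simp: cochains_def)
  moreover have "finite (\<tau> - {v})" using \<rho>(1) assms(1) finite_subset by blast
  ultimately show "\<tau> \<subseteq> C \<and> deg \<tau> = k - 1"
    using assms(2) deg_insert[of "\<tau> - {v}" v] by (metis Diff_iff insert_subset singletonI)
qed

lemma toggle_homotopy_vanishes:
  assumes "u \<noteq> v" "c \<in> cochains (C - {u}) k"
  shows "toggle_homotopy R u v c = (\<lambda>_. 0)"
  using assms by (auto simp: toggle_homotopy_def cochains_def fun_eq_iff)

lemma toggle_homotopy_identity_without:
  assumes "finite C" "v \<in> C" "u \<subseteq> v" "\<tau> \<subseteq> C" "u \<in> \<tau>" "v \<notin> \<tau>"
  shows "c \<tau> = dif C R (toggle_homotopy R u v c) \<tau> + toggle_homotopy R u v (dif C R c) \<tau>"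
proof -
  let ?t = "toggle_homotopy R u v c"
  let ?f = "\<lambda>x. if meet \<tau> \<subseteq> x then ?t (insert x \<tau>) * psign R (insert x \<tau>) x else 0"
  have v: "v \<in> C - \<tau>" "meet \<tau> \<subseteq> v" using assms meet_subset_of_mem[of u \<tau>] by auto
  have "dif C R ?t \<tau> = ?f v + (\<Sum>x\<in>C - \<tau> - {v}. ?f x)"
    using assms(1,4) v(1) by (simp add: dif_eq_sum sum.remove)
  also have "(\<Sum>x\<in>C - \<tau> - {v}. ?f x) = 0"
    using assms(6) by (intro sum.neutral) (auto simp: toggle_homotopy_def)
  also have "?f v = c \<tau>"
    using v assms(5,6) psign_mult_self[of R "insert v \<tau>" v] by (simp add: toggle_homotopy_def)
  finally have "dif C R ?t \<tau> = c \<tau>" by simp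
  moreover have "toggle_homotopy R u v (dif C R c) \<tau> = 0"
    using assms(6) by (simp add: toggle_homotopy_def)
  ultimately show ?thesis by simp
qed

lemma toggle_homotopy_identity_with:
  assumes fin: "finite C" and order: "linear_order_on C R" and uv: "u \<subseteq> v"
    and \<tau>: "insert v \<rho> \<subseteq> C" "u \<in> \<rho>" "v \<notin> \<rho>"
  shows "c (insert v \<rho>) = dif C R (toggle_homotopy R u v c) (insert v \<rho>)
           + toggle_homotopy R u v (dif C R c) (insert v \<rho>)"
proof -
  define \<tau> where "\<tau> = insert v \<rho>"
  let ?t = "toggle_homotopy R u v c"
  define f where "f x = (if meet \<rho> \<subseteq> x then c (insert x \<rho>) * psign R (insert x \<rho>) x else 0)" for x
  define g where "g x = (if meet \<tau> \<subseteq> x then ?t (insert x \<tau>) * psign R (insert x \<tau>) x else 0)" for x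
  have fin\<rho>: "finite \<rho>" using finite_subset[OF \<tau>(1) fin] by simp
  have mv: "meet \<rho> \<subseteq> v" using meet_subset_of_mem[OF \<tau>(2)] uv by auto
  then have meet\<tau>: "meet \<tau> = meet \<rho>" by (simp add: \<tau>_def meet_insert_eq_iff)
  have "dif C R c \<rho> = f v + (\<Sum>x\<in>C - \<tau>. f x)"
  proof -
    have "dif C R c \<rho> = (\<Sum>x\<in>C - \<rho>. f x)" using \<tau>(1) fin by (simp add: dif_eq_sum f_def)
    also have "\<dots> = f v + (\<Sum>x\<in>C - \<rho> - {v}. f x)" using \<tau> fin by (intro sum.remove) auto
    also have "C - \<rho> - {v} = C - \<tau>" by (auto simp: \<tau>_def)
    finally show ?thesis .
  qed
  then have d: "toggle_homotopy R u v (dif C R c) \<tau> = psign R \<tau> v * (f v + (\<Sum>x\<in>C - \<tau>. f x))"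
    using \<tau> by (simp add: toggle_homotopy_def \<tau>_def)
  have fv: "f v = c \<tau> * psign R \<tau> v" using mv by (simp add: f_def \<tau>_def)
  have dt: "dif C R ?t \<tau> = (\<Sum>x\<in>C - \<tau>. g x)"
    using \<tau>(1) fin unfolding \<tau>_def[symmetric] by (simp add: dif_eq_sum g_def)
  have cancel: "g x + psign R \<tau> v * f x = 0" if x: "x \<in> C - \<tau>" for x
  proof -
    have x': "x \<noteq> v" "x \<notin> \<rho>" "x \<notin> \<tau>" "(x, x) \<in> R"
      using x linear_order_on_reflD[OF order] by (auto simp: \<tau>_def)
    have fin\<tau>: "finite \<tau>" using fin\<rho> by (simp add: \<tau>_def)
    have "(v, x) \<in> R \<longleftrightarrow> (x, v) \<notin> R"
      using x x'(1) \<tau>(1) by (intro linear_order_on_not_iff[OF order]) auto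
    moreover have "insert x \<tau> - {v} = insert x \<rho>" using x' \<tau>(3) by (auto simp: \<tau>_def)
    moreover have "psign R \<tau> x = (if (v, x) \<in> R then - psign R \<rho> x else psign R \<rho> x)"
      using psign_insert[OF fin\<rho> \<tau>(3)] by (simp add: \<tau>_def)
    ultimately show ?thesis
      using \<tau>(2) x' fin\<tau> fin\<rho>
      by (cases "(x, v) \<in> R")
        (simp_all add: f_def g_def meet\<tau>[unfolded \<tau>_def] toggle_homotopy_def psign_insert psign_insert_self \<tau>_def)
  qed
  have "dif C R ?t \<tau> + toggle_homotopy R u v (dif C R c) \<tau>
      = (\<Sum>x\<in>C - \<tau>. g x + psign R \<tau> v * f x) + psign R \<tau> v * f v"
    unfolding dt d by (simp add: sum.distrib sum_distrib_left algebra_simps)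
  also have "\<dots> = c \<tau>" using cancel fv psign_mult_self[of R \<tau> v] by (simp add: algebra_simps)
  finally show ?thesis by (simp add: \<tau>_def)
qed

lemma toggle_homotopy_identity:
  assumes "finite C" "linear_order_on C R" "v \<in> C" "u \<noteq> v" "u \<subseteq> v" "\<tau> \<subseteq> C" "u \<in> \<tau>"
  shows "c \<tau> = dif C R (toggle_homotopy R u v c) \<tau> + toggle_homotopy R u v (dif C R c) \<tau>"
proof (cases "v \<in> \<tau>")
  case True
  have "c (insert v (\<tau> - {v})) = dif C R (toggle_homotopy R u v c) (insert v (\<tau> - {v}))
      + toggle_homotopy R u v (dif C R c) (insert v (\<tau> - {v}))"
    using assms True by (intro toggle_homotopy_identity_with) auto
  then show ?thesis using True by (simp add: insert_absorb)
next
  case False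
  then show ?thesis using assms by (intro toggle_homotopy_identity_without) auto
qed

theorem proposition2p1:
  fixes B :: "(complex ^ 'n) set set" and R :: "((complex ^ 'n) set \<times> (complex ^ 'n) set) set"
    and u v :: "(complex ^ 'n) set"
  assumes "finite B"
    and "\<forall>X\<in>B. vec.subspace X"
    and "linear_order_on B R"
    and "u \<in> B" and "v \<in> B" and "u \<noteq> v" and "u \<subseteq> v"
  shows "quasi_iso_incl (B - {u}) (R \<inter> ((B - {u}) \<times> (B - {u}))) B R"
proof -
  interpret quotient_contraction B "B - {u}" R "toggle_homotopy R u v"
  proof
    show "\<And>c k. c \<in> cochains B k \<Longrightarrow> toggle_homotopy R u v c \<in> cochains B (k - 1)"
      using assms by (intro toggle_homotopy_cochains) auto
    show "\<And>c k. c \<in> cochains (B - {u}) k \<Longrightarrow> toggle_homotopy R u v c = (\<lambda>_. 0)"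
      using assms(6) by (rule toggle_homotopy_vanishes)
    show "c \<tau> = dif B R (toggle_homotopy R u v c) \<tau> + toggle_homotopy R u v (dif B R c) \<tau>"
      if "\<tau> \<subseteq> B" "\<not> \<tau> \<subseteq> B - {u}" for c \<tau>
      using assms that by (intro toggle_homotopy_identity) auto
  qed (use assms in auto)
  show ?thesis by (rule quasi_iso_incl)
qed

end
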